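(* Let $\mathrm{E}$ be $\mathrm{x}\simeq\mathrm{y}\diamond((\mathrm{y}\diamond(\mathrm{x}\diamond\mathrm{z}))\diamond\mathrm{z})$ and $\mathrm{E}'$ be $\mathrm{x}\simeq(\mathrm{x}\diamond((\mathrm{x}\diamond\mathrm{x})\diamond\mathrm{x}))\diamond\mathrm{x}$. Then: (a) the magma with carrier $\mathbb{Z}$ and operation $x\diamond y=2x-\lfloor y/2\rfloor$ satisfies $\mathrm{E}$ but not $\mathrm{E}'$, so $\mathrm{E}$ does not imply $\mathrm{E}'$; (b) every finite magma satisfying $\mathrm{E}$ satisfies $\mathrm{E}'$.
   Context: A magma is a set with a binary operation $\diamond$; it satisfies a law if the identity holds for all assignments of variables. *)

theory Defs
  imports Complex_Main
begin

definition satisfies_E :: "('a \<Rightarrow> 'a \<Rightarrow> 'a) \<Rightarrow> bool" where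
  "satisfies_E op \<longleftrightarrow> (\<forall>x y z. x = op y (op (op y (op x z)) z))"

definition satisfies_E' :: "('a \<Rightarrow> 'a \<Rightarrow> 'a) \<Rightarrow> bool" where
  "satisfies_E' op \<longleftrightarrow> (\<forall>x. x = op (op x (op (op x x) x)) x)"

definition zop :: "int \<Rightarrow> int \<Rightarrow> int" where
  "zop x y = 2 * x - \<lfloor>real_of_int y / 2\<rfloor>"

end

(* (b): by E every left multiplication y \<diamond> _ is surjective, hence injective on a finite
   carrier; cancelling x on the left in the instance
   x \<diamond> ((x \<diamond> ((x \<diamond> x) \<diamond> x)) \<diamond> x) = x \<diamond> x of E gives E' at x.
   (a): with x \<diamond> y = 2x - y div 2 and a = z div 2, the inner factor is
   (2x - a) div 2 = x + (-a) div 2, and in the next division the remainder (-a) mod 2 is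
   discarded, leaving 2y - x; so the right-hand side of E collapses to x. *)
theory Submission
  imports Defs
begin

lemma zop_eq_div: "zop x y = 2 * x - y div 2"
proof -
  have "\<lfloor>real_of_int y / 2\<rfloor> = \<lfloor>real_of_int y / real_of_int 2\<rfloor>" by simp
  also have "\<dots> = y div 2" by (rule floor_divide_of_int_eq)
  finally show ?thesis unfolding zop_def by simp
qed

lemma satisfies_E_zop: "satisfies_E zop"
  unfolding satisfies_E_def zop_eq_div
proof (intro allI)
  fix x y z :: int
  define a where "a = z div 2"
  have inner: "(2 * x - a) div 2 = x + (- a) div 2"
    by simp
  have outer: "(2 * (2 * y - (x + (- a) div 2)) - a) div 2 = 2 * y - x"
  proof -
    have "2 * (2 * y - (x + (- a) div 2)) - a = (- a) mod 2 + (2 * y - x) * 2"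
      by (simp add: algebra_simps minus_div_mult_eq_mod [symmetric])
    then show ?thesis by simp
  qed
  show "x = 2 * y - (2 * (2 * y - (2 * x - z div 2) div 2) - z div 2) div 2"
    unfolding a_def [symmetric] inner outer by simp
qed

lemma zop_fails_E'_at_1: "zop (zop 1 (zop (zop 1 1) 1)) 1 = 0"
  by (simp add: zop_eq_div)

lemma not_satisfies_E'_zop: "\<not> satisfies_E' zop"
  unfolding satisfies_E'_def using zop_fails_E'_at_1 by force

lemma satisfies_E_surj_left_mult:
  assumes "satisfies_E op"
  shows "surj (op y)"
proof (rule surjI)
  fix x
  show "op y (op (op y (op x x)) x) = x"
    using assms unfolding satisfies_E_def by metis
qed

lemma satisfies_E_imp_E'_if_left_cancellative:
  assumes E: "satisfies_E op" and cancel: "\<And>y. inj (op y)"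
  shows "satisfies_E' op"
  unfolding satisfies_E'_def
proof
  fix x
  have "op x (op (op x (op (op x x) x)) x) = op x x"
    using E unfolding satisfies_E_def by metis
  then show "x = op (op x (op (op x x) x)) x"
    using cancel [of x] by (metis injD)
qed

lemma finite_satisfies_E_imp_E':
  fixes op :: "'a::finite \<Rightarrow> 'a \<Rightarrow> 'a"
  assumes "satisfies_E op"
  shows "satisfies_E' op"
  using assms finite_UNIV_surj_inj [OF finite_UNIV satisfies_E_surj_left_mult [OF assms]]
  by (rule satisfies_E_imp_E'_if_left_cancellative)

theorem mainTheorem17:
  shows "(satisfies_E zop \<and> \<not> satisfies_E' zop) \<and>
         (\<forall>op :: 'a::finite \<Rightarrow> 'a \<Rightarrow> 'a. satisfies_E op \<longrightarrow> satisfies_E' op)"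
  using satisfies_E_zop not_satisfies_E'_zop finite_satisfies_E_imp_E' by blast

end
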